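(* Let $T$ be the log-partition function of a regular minimal exponential family and let the market cost function be $C=T$ (the generalized LMSR). Suppose an agent has exponential utility $U_a(w)=-\frac1a e^{-aw}$ with $a>0$ and belief $p(\cdot;\hat\theta)$ with $\hat\theta\in\Theta$, and the current market state is $\theta\in\Theta$. Then the portfolio $\delta$ maximizing the agent's expected utility of profit $\langle\delta,\phi(x)\rangle-[C(\theta+\delta)-C(\theta)]$ is unique, equal to $\delta=(\hat\theta-\theta)/(1+a)$, so that the new state is $\theta+\delta=\frac{1}{1+a}\hat\theta+\frac{a}{1+a}\theta$.
   Context: Exponential family with sufficient statistic $\phi:\mathcal{X}\to\mathbb{R}^d$ and base measure $\nu$: $p(x;\theta)=\exp(\langle\theta,\phi(x)\rangle-T(\theta))$, $T(\theta)=\log\int_{\mathcal{X}}\exp\langle\theta,\phi(x)\rangle\,d\nu(x)$, $\Theta=\{\theta:T(\theta)<\infty\}$, assumed open (regular) and with no nonzero $\alpha$ making $\langle\alpha,\phi\rangle$ constant $\nu$-a.e. (minimal). In a cost-function market with cost $C$, buying portfolio $\delta$ at state $\theta$ costs $C(\theta+\delta)-C(\theta)$, moves the state to $\theta+\delta$, and pays $\langle\delta,\phi(x)\rangle$ when outcome $x$ occurs. *)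

theory Defs
  imports "HOL-Analysis.Analysis"
begin

definition part_int :: "'x measure \<Rightarrow> ('x \<Rightarrow> 'b::euclidean_space) \<Rightarrow> 'b \<Rightarrow> ennreal" where
  "part_int \<nu> \<phi> \<theta> = (\<integral>\<^sup>+ x. ennreal (exp (\<theta> \<bullet> \<phi> x)) \<partial>\<nu>)"

definition logpart :: "'x measure \<Rightarrow> ('x \<Rightarrow> 'b::euclidean_space) \<Rightarrow> 'b \<Rightarrow> real" where
  "logpart \<nu> \<phi> \<theta> = ln (enn2real (part_int \<nu> \<phi> \<theta>))"

definition natparam :: "'x measure \<Rightarrow> ('x \<Rightarrow> 'b::euclidean_space) \<Rightarrow> 'b set" where
  "natparam \<nu> \<phi> = {\<theta>. part_int \<nu> \<phi> \<theta> < \<infinity>}"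

definition regular_fam :: "'x measure \<Rightarrow> ('x \<Rightarrow> 'b::euclidean_space) \<Rightarrow> bool" where
  "regular_fam \<nu> \<phi> \<longleftrightarrow> open (natparam \<nu> \<phi>)"

definition minimal_fam :: "'x measure \<Rightarrow> ('x \<Rightarrow> 'b::euclidean_space) \<Rightarrow> bool" where
  "minimal_fam \<nu> \<phi> \<longleftrightarrow> (\<forall>\<alpha>. \<alpha> \<noteq> 0 \<longrightarrow> \<not> (\<exists>c. AE x in \<nu>. \<alpha> \<bullet> \<phi> x = c))"

definition expfam_dens :: "'x measure \<Rightarrow> ('x \<Rightarrow> 'b::euclidean_space) \<Rightarrow> 'b \<Rightarrow> 'x \<Rightarrow> real" where
  "expfam_dens \<nu> \<phi> \<theta> x = exp (\<theta> \<bullet> \<phi> x - logpart \<nu> \<phi> \<theta>)"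

definition exp_utility :: "real \<Rightarrow> real \<Rightarrow> real" where
  "exp_utility a w = - (1 / a) * exp (- a * w)"

definition profit :: "('b::euclidean_space \<Rightarrow> real) \<Rightarrow> ('x \<Rightarrow> 'b) \<Rightarrow> 'b \<Rightarrow> 'b \<Rightarrow> 'x \<Rightarrow> real" where
  "profit C \<phi> \<theta> \<delta> x = \<delta> \<bullet> \<phi> x - (C (\<theta> + \<delta>) - C \<theta>)"

text \<open>Since the utility is negative, the expectation is taken as minus the (possibly infinite)
  nonnegative integral of -U, giving a value in the extended reals (possibly -infinity).\<close>
definition expected_utility ::
  "'x measure \<Rightarrow> ('x \<Rightarrow> 'b::euclidean_space) \<Rightarrow> real \<Rightarrow> 'b \<Rightarrow> 'b \<Rightarrow> 'b \<Rightarrow> ereal" where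
  "expected_utility \<nu> \<phi> a \<theta>hat \<theta> \<delta> =
     - enn2ereal (\<integral>\<^sup>+ x. ennreal (- exp_utility a (profit (logpart \<nu> \<phi>) \<phi> \<theta> \<delta> x)
                                   * expfam_dens \<nu> \<phi> \<theta>hat x) \<partial>\<nu>)"

end

theory Submission imports Defs begin

(* Write Z = part_int (partition function), T = logpart = ln Z and L(d) for the
   expected disutility E[-U_a(profit)] of buying the portfolio d.  Maximizing expected
   utility is the same as minimizing L, and a direct computation gives
     L(d) = (1/a) exp(a (T(theta+d) - T theta) - T thetahat) * Z(thetahat - a d).
   The two arguments theta+d and thetahat - a d always have the same convex combination
     (a/(1+a)) (theta+d) + (1/(1+a)) (thetahat - a d) = theta + d0,
     d0 = (thetahat - theta)/(1+a),
   and they coincide exactly when d = d0.  Strict log-convexity of Z on the natural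
   parameter space (a Hoelder-type inequality, strict because the family is minimal)
   therefore shows L(d0) < L(d) for every other admissible d. *)

section \<open>Strict convexity of the exponential\<close>

lemma exp_strict_convex_comb:
  fixes u v p :: real
  assumes "0 < p" "p < 1" "u \<noteq> v"
  shows "exp (p * u + (1 - p) * v) < p * exp u + (1 - p) * exp v"
proof -
  let ?w = "u - v" and ?m = "p * u + (1 - p) * v"
  \<comment> \<open>Tangent line of exp at 0, strict away from 0, applied at both endpoints.\<close>
  have tangent: "1 + x < exp x" if "x \<noteq> 0" for x :: real
    using exp_minus_greater[of "-x"] that by simp
  have "p * (1 + (1 - p) * ?w) < p * exp ((1 - p) * ?w)"
    using assms by (intro mult_strict_left_mono tangent) auto
  moreover have "(1 - p) * (1 + (- p * ?w)) < (1 - p) * exp (- p * ?w)"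
    using assms by (intro mult_strict_left_mono tangent) auto
  ultimately have "1 < p * exp ((1 - p) * ?w) + (1 - p) * exp (- p * ?w)"
    by (simp add: algebra_simps)
  hence "exp ?m * 1 < exp ?m * (p * exp ((1 - p) * ?w) + (1 - p) * exp (- p * ?w))"
    by simp
  also have "\<dots> = p * exp u + (1 - p) * exp v"
    by (simp add: distrib_left mult.left_commute flip: exp_add) (simp add: algebra_simps)
  finally show ?thesis by simp
qed

lemma exp_convex_comb:
  fixes u v p :: real
  assumes "0 < p" "p < 1"
  shows "exp (p * u + (1 - p) * v) \<le> p * exp u + (1 - p) * exp v"
  using exp_strict_convex_comb[OF assms, of u v]
  by (cases "u = v") (auto simp flip: distrib_right)

text \<open>Integrated form (Hoelder's inequality for two probability densities e^u, e^v):
  the geometric mixture of two densities has total mass below 1 unless they agree a.e.\<close>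

lemma nn_integral_exp_convex_comb_less:
  fixes u v :: "'x \<Rightarrow> real"
  assumes [measurable]: "u \<in> borel_measurable M" "v \<in> borel_measurable M"
    and u1: "(\<integral>\<^sup>+ x. ennreal (exp (u x)) \<partial>M) = 1"
    and v1: "(\<integral>\<^sup>+ x. ennreal (exp (v x)) \<partial>M) = 1"
    and p: "0 < p" "p < 1"
    and differ: "\<not> (AE x in M. u x = v x)"
  shows "(\<integral>\<^sup>+ x. ennreal (exp (p * u x + (1 - p) * v x)) \<partial>M) < 1"
proof -
  let ?geo = "\<lambda>x. exp (p * u x + (1 - p) * v x)"
  let ?arith = "\<lambda>x. p * exp (u x) + (1 - p) * exp (v x)"
  have arith_mass: "(\<integral>\<^sup>+ x. ennreal (?arith x) \<partial>M) = 1"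
  proof -
    have "(\<integral>\<^sup>+ x. ennreal (?arith x) \<partial>M)
        = (\<integral>\<^sup>+ x. ennreal p * ennreal (exp (u x)) + ennreal (1 - p) * ennreal (exp (v x)) \<partial>M)"
      using p by (intro nn_integral_cong) (simp add: ennreal_plus ennreal_mult)
    also have "\<dots> = ennreal p * 1 + ennreal (1 - p) * 1"
      by (subst nn_integral_add) (auto simp: nn_integral_cmult u1 v1)
    also have "\<dots> = 1"
      using p by (simp flip: ennreal_plus)
    finally show ?thesis .
  qed
  have pointwise: "AE x in M. ennreal (?geo x) \<le> ennreal (?arith x)"
    by (intro AE_I2 ennreal_leI exp_convex_comb[OF p])
  have "(\<integral>\<^sup>+ x. ennreal (?geo x) \<partial>M) \<le> 1"
    unfolding arith_mass[symmetric] using pointwise by (rule nn_integral_mono_AE)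
  moreover have "\<not> (AE x in M. ennreal (?arith x) \<le> ennreal (?geo x))"
  proof
    assume "AE x in M. ennreal (?arith x) \<le> ennreal (?geo x)"
    hence "AE x in M. u x = v x"
      by eventually_elim (use exp_strict_convex_comb[OF p] in force)
    with differ show False by contradiction
  qed
  ultimately show ?thesis
    unfolding arith_mass[symmetric] using pointwise
    by (intro nn_integral_less) (auto simp: arith_mass top_unique)
qed

section \<open>The partition function of a minimal exponential family\<close>

lemma minimal_fam_not_null:
  fixes \<phi> :: "'x \<Rightarrow> 'b::euclidean_space"
  assumes "minimal_fam \<nu> \<phi>"
  shows "\<not> (AE x in \<nu>. False)"
proof
  obtain b :: 'b where "b \<in> Basis" using nonempty_Basis by blast
  hence "b \<noteq> 0" by auto
  moreover assume "AE x in \<nu>. False"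
  hence "AE x in \<nu>. b \<bullet> \<phi> x = 0" by auto
  ultimately show False using assms unfolding minimal_fam_def by blast
qed

lemma part_int_pos:
  assumes [measurable]: "\<phi> \<in> borel_measurable \<nu>" and "minimal_fam \<nu> \<phi>"
  shows "part_int \<nu> \<phi> \<theta> > 0"
proof (rule ccontr)
  assume "\<not> part_int \<nu> \<phi> \<theta> > 0"
  hence "AE x in \<nu>. ennreal (exp (\<theta> \<bullet> \<phi> x)) = 0"
    unfolding part_int_def by (subst nn_integral_0_iff_AE[symmetric]) (auto simp: zero_less_iff_neq_zero)
  hence "AE x in \<nu>. False" by simp
  with minimal_fam_not_null[OF assms(2)] show False by contradiction
qed

lemma part_int_eq_exp_logpart:
  assumes "\<phi> \<in> borel_measurable \<nu>" "minimal_fam \<nu> \<phi>" "\<theta> \<in> natparam \<nu> \<phi>"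
  shows "part_int \<nu> \<phi> \<theta> = ennreal (exp (logpart \<nu> \<phi> \<theta>))"
proof -
  have "enn2real (part_int \<nu> \<phi> \<theta>) > 0"
    using part_int_pos[OF assms(1,2)] assms(3) unfolding natparam_def
    by (simp add: enn2real_positive_iff)
  thus ?thesis
    using assms(3) unfolding logpart_def natparam_def by (simp add: ennreal_enn2real)
qed

lemma part_int_shift:
  assumes [measurable]: "\<phi> \<in> borel_measurable \<nu>"
  shows "(\<integral>\<^sup>+ x. ennreal (exp (\<theta> \<bullet> \<phi> x - c)) \<partial>\<nu>) = part_int \<nu> \<phi> \<theta> * ennreal (exp (- c))"
proof -
  have "(\<integral>\<^sup>+ x. ennreal (exp (\<theta> \<bullet> \<phi> x - c)) \<partial>\<nu>)
      = (\<integral>\<^sup>+ x. ennreal (exp (\<theta> \<bullet> \<phi> x)) * ennreal (exp (- c)) \<partial>\<nu>)"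
    by (intro nn_integral_cong) (simp add: exp_diff exp_minus divide_inverse ennreal_mult')
  also have "\<dots> = part_int \<nu> \<phi> \<theta> * ennreal (exp (- c))"
    unfolding part_int_def by (rule nn_integral_multc) measurable
  finally show ?thesis .
qed

lemma expfam_dens_integral:
  assumes "\<phi> \<in> borel_measurable \<nu>" "minimal_fam \<nu> \<phi>" "\<theta> \<in> natparam \<nu> \<phi>"
  shows "(\<integral>\<^sup>+ x. ennreal (expfam_dens \<nu> \<phi> \<theta> x) \<partial>\<nu>) = 1"
  unfolding expfam_dens_def part_int_shift[OF assms(1)] part_int_eq_exp_logpart[OF assms]
  by (simp flip: ennreal_mult' exp_add)

text \<open>Strict convexity of T (and convexity of its domain along the segment), from
  Hoelder's inequality applied to the densities at the two endpoints; strictness is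
  exactly minimality of the family.\<close>

lemma logpart_strict_convex:
  fixes \<phi> :: "'x \<Rightarrow> 'b::euclidean_space"
  assumes mphi[measurable]: "\<phi> \<in> borel_measurable \<nu>" and mini: "minimal_fam \<nu> \<phi>"
    and \<eta>: "\<eta> \<in> natparam \<nu> \<phi>" and \<xi>: "\<xi> \<in> natparam \<nu> \<phi>" and "\<eta> \<noteq> \<xi>"
    and p: "0 < p" "p < 1"
  defines "w \<equiv> p *\<^sub>R \<eta> + (1 - p) *\<^sub>R \<xi>"
  shows "w \<in> natparam \<nu> \<phi>"
    and "logpart \<nu> \<phi> w < p * logpart \<nu> \<phi> \<eta> + (1 - p) * logpart \<nu> \<phi> \<xi>"
proof -
  define c where "c = p * logpart \<nu> \<phi> \<eta> + (1 - p) * logpart \<nu> \<phi> \<xi>"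
  define u where "u x = \<eta> \<bullet> \<phi> x - logpart \<nu> \<phi> \<eta>" for x
  define v where "v x = \<xi> \<bullet> \<phi> x - logpart \<nu> \<phi> \<xi>" for x
  have differ: "\<not> (AE x in \<nu>. u x = v x)"
  proof
    assume "AE x in \<nu>. u x = v x"
    hence "AE x in \<nu>. (\<eta> - \<xi>) \<bullet> \<phi> x = logpart \<nu> \<phi> \<eta> - logpart \<nu> \<phi> \<xi>"
      by eventually_elim (simp add: u_def v_def inner_diff_left)
    with mini \<open>\<eta> \<noteq> \<xi>\<close> show False unfolding minimal_fam_def by auto
  qed
  have "(\<integral>\<^sup>+ x. ennreal (exp (p * u x + (1 - p) * v x)) \<partial>\<nu>) < 1"
    using expfam_dens_integral[OF mphi mini \<eta>] expfam_dens_integral[OF mphi mini \<xi>] p differ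
    by (intro nn_integral_exp_convex_comb_less) (auto simp: u_def v_def expfam_dens_def)
  moreover have "p * u x + (1 - p) * v x = w \<bullet> \<phi> x - c" for x
    unfolding u_def v_def w_def c_def by (simp add: inner_add_left algebra_simps)
  ultimately have mass: "part_int \<nu> \<phi> w * ennreal (exp (- c)) < 1"
    by (simp add: part_int_shift)
  thus w_in: "w \<in> natparam \<nu> \<phi>"
    unfolding natparam_def by (cases "part_int \<nu> \<phi> w = \<infinity>") (auto simp: less_top)
  have "ennreal (exp (logpart \<nu> \<phi> w - c)) < 1"
    using mass by (simp add: part_int_eq_exp_logpart[OF mphi mini w_in] exp_diff
        divide_inverse exp_minus flip: ennreal_mult')
  thus "logpart \<nu> \<phi> w < c"
    by (simp add: ennreal_less_iff)
qed

section \<open>Expected disutility of a trade in the generalized LMSR\<close>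

definition expected_disutility ::
  "'x measure \<Rightarrow> ('x \<Rightarrow> 'b::euclidean_space) \<Rightarrow> real \<Rightarrow> 'b \<Rightarrow> 'b \<Rightarrow> 'b \<Rightarrow> ennreal" where
  "expected_disutility \<nu> \<phi> a \<theta>hat \<theta> \<delta> =
     (\<integral>\<^sup>+ x. ennreal (- exp_utility a (profit (logpart \<nu> \<phi>) \<phi> \<theta> \<delta> x)
                       * expfam_dens \<nu> \<phi> \<theta>hat x) \<partial>\<nu>)"

lemma expected_utility_le_iff:
  "expected_utility \<nu> \<phi> a \<theta>hat \<theta> \<delta>' \<le> expected_utility \<nu> \<phi> a \<theta>hat \<theta> \<delta>
   \<longleftrightarrow> expected_disutility \<nu> \<phi> a \<theta>hat \<theta> \<delta> \<le> expected_disutility \<nu> \<phi> a \<theta>hat \<theta> \<delta>'"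
  unfolding expected_utility_def expected_disutility_def by (simp add: less_eq_ennreal.rep_eq)

text \<open>Closed form: the integrand is a constant times the unnormalized density at
  thetahat - a d.\<close>

lemma expected_disutility_eq:
  fixes \<phi> :: "'x \<Rightarrow> 'b::euclidean_space"
  assumes [measurable]: "\<phi> \<in> borel_measurable \<nu>" and a: "a > 0"
  shows "expected_disutility \<nu> \<phi> a \<theta>hat \<theta> d
    = ennreal ((1 / a) * exp (a * (logpart \<nu> \<phi> (\<theta> + d) - logpart \<nu> \<phi> \<theta>) - logpart \<nu> \<phi> \<theta>hat))
      * part_int \<nu> \<phi> (\<theta>hat - a *\<^sub>R d)"
proof -
  define K where
    "K = (1 / a) * exp (a * (logpart \<nu> \<phi> (\<theta> + d) - logpart \<nu> \<phi> \<theta>) - logpart \<nu> \<phi> \<theta>hat)"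
  have integrand: "- exp_utility a (profit (logpart \<nu> \<phi>) \<phi> \<theta> d x) * expfam_dens \<nu> \<phi> \<theta>hat x
      = K * exp ((\<theta>hat - a *\<^sub>R d) \<bullet> \<phi> x)" for x
  proof -
    have "- a * (d \<bullet> \<phi> x - (logpart \<nu> \<phi> (\<theta> + d) - logpart \<nu> \<phi> \<theta>))
            + (\<theta>hat \<bullet> \<phi> x - logpart \<nu> \<phi> \<theta>hat)
        = (a * (logpart \<nu> \<phi> (\<theta> + d) - logpart \<nu> \<phi> \<theta>) - logpart \<nu> \<phi> \<theta>hat)
            + (\<theta>hat - a *\<^sub>R d) \<bullet> \<phi> x"
      by (simp add: inner_diff_left algebra_simps)
    thus ?thesis
      unfolding exp_utility_def profit_def expfam_dens_def K_def
      by (simp flip: exp_add)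
  qed
  have "expected_disutility \<nu> \<phi> a \<theta>hat \<theta> d
      = (\<integral>\<^sup>+ x. ennreal K * ennreal (exp ((\<theta>hat - a *\<^sub>R d) \<bullet> \<phi> x)) \<partial>\<nu>)"
    unfolding expected_disutility_def integrand using a
    by (intro nn_integral_cong) (simp add: K_def flip: ennreal_mult')
  also have "\<dots> = ennreal K * part_int \<nu> \<phi> (\<theta>hat - a *\<^sub>R d)"
    unfolding part_int_def by (rule nn_integral_cmult) measurable
  finally show ?thesis unfolding K_def .
qed

lemma expected_disutility_eq_exp:
  fixes \<phi> :: "'x \<Rightarrow> 'b::euclidean_space"
  assumes mphi: "\<phi> \<in> borel_measurable \<nu>" and mini: "minimal_fam \<nu> \<phi>" and a: "a > 0"
    and dom: "\<theta>hat - a *\<^sub>R d \<in> natparam \<nu> \<phi>"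
  shows "expected_disutility \<nu> \<phi> a \<theta>hat \<theta> d
    = ennreal ((1 / a) * exp (a * logpart \<nu> \<phi> (\<theta> + d) + logpart \<nu> \<phi> (\<theta>hat - a *\<^sub>R d)
                              - a * logpart \<nu> \<phi> \<theta> - logpart \<nu> \<phi> \<theta>hat))"
  unfolding expected_disutility_eq[OF mphi a] part_int_eq_exp_logpart[OF mphi mini dom]
  using a by (simp add: algebra_simps flip: ennreal_mult' exp_add)

section \<open>The optimal trade\<close>

lemma optimal_trade_identities:
  fixes \<theta>hat \<theta> d :: "'b::real_vector" and a :: real
  assumes a: "a > 0"
  defines "d0 \<equiv> (1 / (1 + a)) *\<^sub>R (\<theta>hat - \<theta>)"
  shows "\<theta> + d0 = (1 / (1 + a)) *\<^sub>R \<theta>hat + (a / (1 + a)) *\<^sub>R \<theta>"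
    and "\<theta>hat - a *\<^sub>R d0 = \<theta> + d0"
    and "(a / (1 + a)) *\<^sub>R (\<theta> + d) + (1 - a / (1 + a)) *\<^sub>R (\<theta>hat - a *\<^sub>R d) = \<theta> + d0"
proof -
  have ne: "1 + a \<noteq> 0" using a by simp
  have cancel: "x = y" if "(1 + a) *\<^sub>R x = (1 + a) *\<^sub>R y" for x y :: 'b
    using that ne by simp
  have a_frac: "(a + a * a) / (1 + a) = a" using ne by (simp add: field_simps)
  show "\<theta> + d0 = (1 / (1 + a)) *\<^sub>R \<theta>hat + (a / (1 + a)) *\<^sub>R \<theta>"
    by (rule cancel) (simp add: d0_def algebra_simps ne divide_simps a_frac)
  show "\<theta>hat - a *\<^sub>R d0 = \<theta> + d0"
    by (rule cancel) (simp add: d0_def algebra_simps ne divide_simps a_frac)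
  show "(a / (1 + a)) *\<^sub>R (\<theta> + d) + (1 - a / (1 + a)) *\<^sub>R (\<theta>hat - a *\<^sub>R d) = \<theta> + d0"
    by (rule cancel) (simp add: d0_def algebra_simps ne divide_simps a_frac)
qed

lemma optimal_trade_strict:
  fixes \<phi> :: "'x \<Rightarrow> 'b::euclidean_space"
  assumes mphi: "\<phi> \<in> borel_measurable \<nu>" and mini: "minimal_fam \<nu> \<phi>" and a: "a > 0"
    and \<theta>hat: "\<theta>hat \<in> natparam \<nu> \<phi>" and \<theta>: "\<theta> \<in> natparam \<nu> \<phi>"
  defines "d0 \<equiv> (1 / (1 + a)) *\<^sub>R (\<theta>hat - \<theta>)"
  shows "\<theta> + d0 \<in> natparam \<nu> \<phi>"
    and "\<theta> + d \<in> natparam \<nu> \<phi> \<Longrightarrow> d \<noteq> d0 \<Longrightarrow>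
         expected_disutility \<nu> \<phi> a \<theta>hat \<theta> d0 < expected_disutility \<nu> \<phi> a \<theta>hat \<theta> d"
proof -
  define p where "p = a / (1 + a)"
  have p: "0 < p" "p < 1" using a by (auto simp: p_def)
  note ids = optimal_trade_identities[OF a, where \<theta>hat = \<theta>hat and \<theta> = \<theta>, folded d0_def p_def]
  let ?T = "logpart \<nu> \<phi>" and ?L = "expected_disutility \<nu> \<phi> a \<theta>hat \<theta>"
  show d0_in: "\<theta> + d0 \<in> natparam \<nu> \<phi>"
  proof (cases "\<theta> = \<theta>hat")
    case False
    have "\<theta> + d0 = p *\<^sub>R \<theta> + (1 - p) *\<^sub>R \<theta>hat" using ids(3)[of 0] by simp
    thus ?thesis using logpart_strict_convex(1)[OF mphi mini \<theta> \<theta>hat False p] by simp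
  qed (simp add: d0_def \<theta>hat)
  have L_d0: "?L d0 = ennreal ((1 / a) * exp ((1 + a) * ?T (\<theta> + d0) - a * ?T \<theta> - ?T \<theta>hat))"
    using expected_disutility_eq_exp[OF mphi mini a, of \<theta>hat d0 \<theta>] ids(2) d0_in
    by (simp add: algebra_simps)
  assume d: "\<theta> + d \<in> natparam \<nu> \<phi>" "d \<noteq> d0"
  show "?L d0 < ?L d"
  proof (cases "\<theta>hat - a *\<^sub>R d \<in> natparam \<nu> \<phi>")
    case False
    \<comment> \<open>Outside the natural parameter space the expected disutility is infinite.\<close>
    hence "part_int \<nu> \<phi> (\<theta>hat - a *\<^sub>R d) = \<infinity>" by (simp add: natparam_def flip: less_top)
    hence "?L d = \<infinity>" using a by (simp add: expected_disutility_eq[OF mphi a])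
    thus ?thesis using L_d0 by simp
  next
    case True
    have "\<theta> + d \<noteq> \<theta>hat - a *\<^sub>R d"
    proof
      assume "\<theta> + d = \<theta>hat - a *\<^sub>R d"
      hence "\<theta> + d0 = \<theta> + d" using ids(3)[of d] by (simp flip: scaleR_add_left)
      with d(2) show False by simp
    qed
    hence "?T (\<theta> + d0) < p * ?T (\<theta> + d) + (1 - p) * ?T (\<theta>hat - a *\<^sub>R d)"
      using logpart_strict_convex(2)[OF mphi mini d(1) True _ p] ids(3)[of d] by simp
    hence "(1 + a) * ?T (\<theta> + d0)
        < (1 + a) * (p * ?T (\<theta> + d) + (1 - p) * ?T (\<theta>hat - a *\<^sub>R d))"
      using a by (intro mult_strict_left_mono) auto
    also have "\<dots> = a * ?T (\<theta> + d) + ?T (\<theta>hat - a *\<^sub>R d)"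
    proof -
      have "(1 + a) * p = a" "(1 + a) * (1 - p) = 1" using a by (simp_all add: p_def field_simps)
      thus ?thesis by (simp add: distrib_left mult.assoc[symmetric])
    qed
    finally show ?thesis
      using a L_d0 expected_disutility_eq_exp[OF mphi mini a True] by (simp add: ennreal_less_iff divide_strict_right_mono)
  qed
qed

lemma unique_minimizer:
  fixes f :: "'a \<Rightarrow> 'c::linorder"
  assumes "P x0" and "\<And>y. P y \<Longrightarrow> y \<noteq> x0 \<Longrightarrow> f x0 < f y"
  shows "{x. P x \<and> (\<forall>y. P y \<longrightarrow> f x \<le> f y)} = {x0}"
  using assms by (auto simp: order.order_iff_strict) (metis not_less_iff_gr_or_eq)

theorem theorem3:
  fixes \<nu> :: "'x measure" and \<phi> :: "'x \<Rightarrow> 'b::euclidean_space"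
    and a :: real and \<theta>hat \<theta> :: 'b
  assumes "\<phi> \<in> borel_measurable \<nu>"
    and "regular_fam \<nu> \<phi>" and "minimal_fam \<nu> \<phi>"
    and "a > 0"
    and "\<theta>hat \<in> natparam \<nu> \<phi>" and "\<theta> \<in> natparam \<nu> \<phi>"
  shows "{\<delta>. \<theta> + \<delta> \<in> natparam \<nu> \<phi> \<and>
            (\<forall>\<delta>'. \<theta> + \<delta>' \<in> natparam \<nu> \<phi> \<longrightarrow>
                  expected_utility \<nu> \<phi> a \<theta>hat \<theta> \<delta>' \<le> expected_utility \<nu> \<phi> a \<theta>hat \<theta> \<delta>)}
         = {(1 / (1 + a)) *\<^sub>R (\<theta>hat - \<theta>)}
       \<and> \<theta> + (1 / (1 + a)) *\<^sub>R (\<theta>hat - \<theta>) = (1 / (1 + a)) *\<^sub>R \<theta>hat + (a / (1 + a)) *\<^sub>R \<theta>"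
proof
  note strict = optimal_trade_strict[OF assms(1,3-6)]
  show "{\<delta>. \<theta> + \<delta> \<in> natparam \<nu> \<phi> \<and>
            (\<forall>\<delta>'. \<theta> + \<delta>' \<in> natparam \<nu> \<phi> \<longrightarrow>
                  expected_utility \<nu> \<phi> a \<theta>hat \<theta> \<delta>' \<le> expected_utility \<nu> \<phi> a \<theta>hat \<theta> \<delta>)}
         = {(1 / (1 + a)) *\<^sub>R (\<theta>hat - \<theta>)}"
    unfolding expected_utility_le_iff using strict by (rule unique_minimizer)
  show "\<theta> + (1 / (1 + a)) *\<^sub>R (\<theta>hat - \<theta>) = (1 / (1 + a)) *\<^sub>R \<theta>hat + (a / (1 + a)) *\<^sub>R \<theta>"
    using optimal_trade_identities(1)[OF assms(4)] .
qed

end
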